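(* Let $\mathcal{G}=(V,\mathcal{W},\{P_S\})$ be a Max $k$-CSP instance and let $\mu=\{\mathcal{X}_S\}$ be a $k$-level $\kappa$-independent Sherali-Adams solution of value $1-\delta$. Then the random assignment $\phi:V\to\Sigma$ obtained by choosing each $\phi(x)$ independently according to the marginal $\mathcal{X}_{\{x\}}$ (independent rounding) has expected value at least $(\delta^\delta e^{-\kappa})^{\frac{1}{1-\delta}}(1-\delta)$.
   Context: A Max $k$-CSP instance has finite variable set $V$, alphabet $\Sigma$, a distribution $\mathcal{W}$ on $V^k$ and predicates $P_S:\Sigma^k\to[0,1]$; the value of $\phi:V\to\Sigma$ is $\mathbb{E}_{S\sim\mathcal{W}}[P_S(\phi|_S)]$. Convention: if a tuple $S$ contains a repeated variable, $P_S$ is $0$ on any assignment giving different values to the same variable. An $r$-level Sherali-Adams (SA) solution is a collection $\mu=\{\mathcal{X}_S\}$ of distributions $\mathcal{X}_S$ on $\Sigma^S$, one for each $S\subseteq V$ with $|S|\le r$, such that for all such $S,T$ the marginals of $\mathcal{X}_S$ and $\mathcal{X}_T$ on $\Sigma^{S\cap T}$ agree. For $r\ge k$ its value is $\mathbb{E}_{S\sim\mathcal{W}}[\mathbb{E}_{\phi_S\sim\mathcal{X}_{\{x_{i_1},\dots,x_{i_k}\}}}[P_S(\phi_S)]]$ where $S=(x_{i_1},\dots,x_{i_k})$. For a tuple $S=(x_{i_1},\dots,x_{i_j})$, $C_\mu(x_S)$ is the total correlation $C(\sigma_{i_1};\dots;\sigma_{i_j})=D_{KL}(\text{joint}\,\|\,\text{product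 of marginals})$ where $(\sigma_{i_1},\dots,\sigma_{i_j})$ is jointly sampled from $\mathcal{X}_{\{x_{i_1},\dots,x_{i_j}\}}$. $C(\mu)=\mathbb{E}_{S\sim\mathcal{W}}[C_\mu(x_S)]$, and $\mu$ is $\kappa$-independent if $C(\mu)\le\kappa$. Natural logarithms throughout; $0^0=1$, and the bound is defined to be $0$ when $\delta=1$. *)

theory Defs
  imports "HOL-Probability.Probability"
begin

text \<open>A k-tuple of variables is a list of length k; W is a pmf on such lists;
  P S is the predicate of tuple S, evaluated on the list of values.
  A local distribution on Sigma^S is a pmf on functions in PiE S UNIV
  (functions that are undefined outside S).\<close>

definition csp_instance ::
  "nat \<Rightarrow> 'v::finite list pmf \<Rightarrow> ('v list \<Rightarrow> 's::finite list \<Rightarrow> real) \<Rightarrow> bool" where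
  "csp_instance k W P \<longleftrightarrow>
     (\<forall>S \<in> set_pmf W. length S = k) \<and>
     (\<forall>S \<sigma>. 0 \<le> P S \<sigma> \<and> P S \<sigma> \<le> 1) \<and>
     (\<forall>S \<in> set_pmf W. \<forall>\<sigma>. length \<sigma> = k \<longrightarrow>
        (\<exists>i<k. \<exists>j<k. S ! i = S ! j \<and> \<sigma> ! i \<noteq> \<sigma> ! j) \<longrightarrow> P S \<sigma> = 0)"

definition SA_solution :: "nat \<Rightarrow> ('v::finite set \<Rightarrow> ('v \<Rightarrow> 's::finite) pmf) \<Rightarrow> bool" where
  "SA_solution r X \<longleftrightarrow>
     (\<forall>S. card S \<le> r \<longrightarrow> set_pmf (X S) \<subseteq> PiE S (\<lambda>_. UNIV)) \<and>
     (\<forall>S T. card S \<le> r \<longrightarrow> card T \<le> r \<longrightarrow>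
        map_pmf (\<lambda>f. restrict f (S \<inter> T)) (X S) = map_pmf (\<lambda>f. restrict f (S \<inter> T)) (X T))"

definition SA_value ::
  "'v::finite list pmf \<Rightarrow> ('v list \<Rightarrow> 's::finite list \<Rightarrow> real) \<Rightarrow> ('v set \<Rightarrow> ('v \<Rightarrow> 's) pmf) \<Rightarrow> real" where
  "SA_value W P X =
     measure_pmf.expectation W (\<lambda>S. measure_pmf.expectation (X (set S)) (\<lambda>\<phi>. P S (map \<phi> S)))"

definition KL_div :: "'a pmf \<Rightarrow> ('a \<Rightarrow> real) \<Rightarrow> real" where
  "KL_div p q = (\<Sum>y\<in>set_pmf p. pmf p y * ln (pmf p y / q y))"

definition total_corr :: "('v set \<Rightarrow> ('v \<Rightarrow> 's) pmf) \<Rightarrow> 'v list \<Rightarrow> real" where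
  "total_corr X S =
     (let J = map_pmf (\<lambda>\<phi>. map \<phi> S) (X (set S)) in
      KL_div J (\<lambda>ys. \<Prod>i<length S. pmf (map_pmf (\<lambda>\<phi>. \<phi> (S ! i)) (X (set S))) (ys ! i)))"

definition corr :: "'v list pmf \<Rightarrow> ('v set \<Rightarrow> ('v \<Rightarrow> 's) pmf) \<Rightarrow> real" where
  "corr W X = measure_pmf.expectation W (\<lambda>S. total_corr X S)"

definition indep_rounding :: "('v::finite set \<Rightarrow> ('v \<Rightarrow> 's) pmf) \<Rightarrow> ('v \<Rightarrow> 's) pmf" where
  "indep_rounding X = Pi_pmf UNIV undefined (\<lambda>x. map_pmf (\<lambda>\<phi>. \<phi> x) (X {x}))"

definition assignment_value ::
  "'v list pmf \<Rightarrow> ('v list \<Rightarrow> 's list \<Rightarrow> real) \<Rightarrow> ('v \<Rightarrow> 's) \<Rightarrow> real" where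
  "assignment_value W P \<phi> = measure_pmf.expectation W (\<lambda>S. P S (map \<phi> S))"

definition rounding_bound :: "real \<Rightarrow> real \<Rightarrow> real" where
  "rounding_bound \<delta> \<kappa> =
     (if \<delta> = 1 then 0
      else ((if \<delta> = 0 then 1 else \<delta> powr \<delta>) * exp (- \<kappa>)) powr (1 / (1 - \<delta>)) * (1 - \<delta>))"

end

theory Submission
  imports Defs
begin

text \<open>Fix a tuple \<open>S\<close>, let \<open>p\<close> be its local joint law, \<open>q\<close> the product of its marginals
  and \<open>a\<close> its SA value. Gibbs' inequality \<open>p ln t + p - t q \<le> p ln (p / q)\<close>, used with
  \<open>t = t\<^sub>1\<close> on the part of \<open>p\<close> weighted by \<open>P\<^sub>S\<close> and \<open>t = t\<^sub>2\<close> on the rest, gives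
  \<open>a ln t\<^sub>1 + (1 - a) ln t\<^sub>2 + 1 - t\<^sub>1 b - t\<^sub>2 \<le> C(x\<^sub>S)\<close>, with \<open>b\<close> the value of \<open>S\<close> under
  independent rounding: by consistency of the SA marginals, \<open>q\<close> is dominated by the law of the
  rounded tuple (repeated variables only contribute extra factors \<open>\<le> 1\<close>). The bound is affine, so
  it averages to \<open>(1 - \<delta>) ln t\<^sub>1 + \<delta> ln t\<^sub>2 + 1 - t\<^sub>1 E - t\<^sub>2 \<le> \<kappa>\<close> for the expected rounded
  value \<open>E\<close>; the choice \<open>t\<^sub>2 = \<delta>\<close>, \<open>t\<^sub>1 = (1 - \<delta>) / E\<close> gives the bound.\<close>

lemma mult_ln_le_mult_ln_div:
  fixes p q t :: real
  assumes "0 < p" "0 < q" "0 < t"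
  shows "p * ln t + p - t * q \<le> p * ln (p / q)"
proof -
  have "ln (t * q / p) \<le> t * q / p - 1"
    using assms by (intro ln_le_minus_one) simp
  then have "p * ln (t * q / p) \<le> t * q - p"
    using assms by (simp add: field_simps mult_left_mono)
  moreover have "p * ln t = p * ln (p / q) + p * ln (t * q / p)"
    using assms by (simp add: ln_div ln_mult algebra_simps)
  ultimately show ?thesis by linarith
qed

lemma KL_div_ge_two_point_test:
  fixes J D :: "'a pmf" and Q f :: "'a \<Rightarrow> real" and t1 t2 :: real
  assumes fin: "finite (set_pmf J)" "finite (set_pmf D)"
    and Q: "\<And>y. y \<in> set_pmf J \<Longrightarrow> 0 < Q y \<and> Q y \<le> pmf D y"
    and f: "\<And>y. 0 \<le> f y \<and> f y \<le> 1"
    and t: "0 < t1" "0 < t2"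
  shows "ln t1 * measure_pmf.expectation J f + ln t2 * (1 - measure_pmf.expectation J f) + 1
           - t1 * measure_pmf.expectation D f - t2 \<le> KL_div J Q"
proof -
  define Y where "Y = set_pmf J"
  have sum_J: "(\<Sum>y\<in>Y. pmf J y) = 1"
    unfolding Y_def using fin by (simp add: sum_pmf_eq_1)
  have E_J: "measure_pmf.expectation J f = (\<Sum>y\<in>Y. f y * pmf J y)"
    unfolding Y_def using fin by (intro integral_measure_pmf_real) auto
  have sum_fQ: "(\<Sum>y\<in>Y. f y * Q y) \<le> measure_pmf.expectation D f"
  proof -
    have "(\<Sum>y\<in>Y. f y * Q y) \<le> (\<Sum>y\<in>Y \<union> set_pmf D. f y * pmf D y)"
      using Q f fin unfolding Y_def
      by (intro order.trans[OF sum_mono sum_mono2] mult_left_mono) auto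
    also have "\<dots> = measure_pmf.expectation D f"
      using fin unfolding Y_def by (intro integral_measure_pmf_real[symmetric]) auto
    finally show ?thesis .
  qed
  have sum_Q: "(\<Sum>y\<in>Y. (1 - f y) * Q y) \<le> 1"
  proof -
    have "(\<Sum>y\<in>Y. (1 - f y) * Q y) \<le> (\<Sum>y\<in>Y. pmf D y)"
      using Q f unfolding Y_def
      by (intro sum_mono order.trans[OF mult_left_le_one_le]) (auto simp: less_imp_le)
    also have "\<dots> = measure_pmf.prob D Y"
      using fin unfolding Y_def by (simp add: measure_measure_pmf_finite)
    also have "\<dots> \<le> 1" by (rule measure_pmf.prob_le_1)
    finally show ?thesis .
  qed
  have pointwise: "f y * (pmf J y * ln t1 + pmf J y - t1 * Q y)
      + (1 - f y) * (pmf J y * ln t2 + pmf J y - t2 * Q y) \<le> pmf J y * ln (pmf J y / Q y)"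
    if "y \<in> Y" for y
  proof -
    have "0 < pmf J y" using that unfolding Y_def by (simp add: pmf_positive)
    then have "pmf J y * ln t + pmf J y - t * Q y \<le> pmf J y * ln (pmf J y / Q y)" if "0 < t" for t
      using Q \<open>y \<in> Y\<close> that unfolding Y_def by (intro mult_ln_le_mult_ln_div) auto
    from this[OF t(1)] this[OF t(2)] f[of y] show ?thesis
      by (intro convex_bound_le) auto
  qed
  have "(\<Sum>y\<in>Y. f y * (pmf J y * ln t1 + pmf J y - t1 * Q y)
                + (1 - f y) * (pmf J y * ln t2 + pmf J y - t2 * Q y))
      = ln t1 * (\<Sum>y\<in>Y. f y * pmf J y)
        + ln t2 * ((\<Sum>y\<in>Y. pmf J y) - (\<Sum>y\<in>Y. f y * pmf J y)) + (\<Sum>y\<in>Y. pmf J y)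
        - t1 * (\<Sum>y\<in>Y. f y * Q y) - t2 * (\<Sum>y\<in>Y. (1 - f y) * Q y)"
    by (simp add: sum.distrib sum_subtractf sum_distrib_left algebra_simps)
  moreover have "(\<Sum>y\<in>Y. f y * (pmf J y * ln t1 + pmf J y - t1 * Q y)
                + (1 - f y) * (pmf J y * ln t2 + pmf J y - t2 * Q y)) \<le> KL_div J Q"
    unfolding KL_div_def Y_def[symmetric] using pointwise by (rule sum_mono)
  moreover have "t1 * (\<Sum>y\<in>Y. f y * Q y) \<le> t1 * measure_pmf.expectation D f"
    using sum_fQ t by simp
  moreover have "t2 * (\<Sum>y\<in>Y. (1 - f y) * Q y) \<le> t2"
    using sum_Q t by simp
  ultimately show ?thesis
    unfolding E_J sum_J by linarith
qed

lemma rounding_bound_eq_exp: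
  assumes "0 \<le> \<delta>" "\<delta> < 1"
  shows "rounding_bound \<delta> \<kappa> = (1 - \<delta>) * exp ((\<delta> * ln \<delta> - \<kappa>) / (1 - \<delta>))"
  using assms by (auto simp: rounding_bound_def powr_def exp_add[symmetric] field_simps)

lemma rounding_bound_le_of_variational:
  fixes \<delta> \<kappa> B :: real
  assumes "0 \<le> \<delta>" "\<delta> \<le> 1" "0 \<le> B"
    and var: "\<And>t1 t2. 0 < t1 \<Longrightarrow> 0 < t2 \<Longrightarrow> ln t1 * (1 - \<delta>) + ln t2 * \<delta> + 1 - t1 * B - t2 \<le> \<kappa>"
  shows "rounding_bound \<delta> \<kappa> \<le> B"
proof (cases "\<delta> = 1")
  case True
  then show ?thesis using assms by (simp add: rounding_bound_def)
next
  case False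
  define a where "a = 1 - \<delta>"
  have a: "0 < a" using False assms unfolding a_def by simp
  txt \<open>Optimise over \<open>t2\<close>: take \<open>t2 = \<delta>\<close>, or let \<open>t2 \<rightarrow> 0\<close> if \<open>\<delta> = 0\<close> (recall \<open>0 * ln 0 = 0\<close>).\<close>
  have entropic: "a * ln t + a - t * B + \<delta> * ln \<delta> \<le> \<kappa>" if "0 < t" for t
  proof (cases "\<delta> = 0")
    case True
    have "ln t + 1 - t * B \<le> \<kappa> + e" if "0 < e" for e
      using var[OF \<open>0 < t\<close> \<open>0 < e\<close>] True by simp
    then show ?thesis using True a_def by (simp add: field_le_epsilon)
  next
    case False
    then show ?thesis
      using var[OF \<open>0 < t\<close>, of \<delta>] assms by (simp add: a_def algebra_simps)
  qed
  have "0 < B"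
  proof (rule ccontr)
    assume "\<not> 0 < B"
    then have "B = 0" using assms by simp
    then show False
      using entropic[of "exp ((\<kappa> - \<delta> * ln \<delta>) / a)"] a by simp
  qed
  have "a * ln a - a * ln B + \<delta> * ln \<delta> \<le> \<kappa>"
    using entropic[of "a / B"] a \<open>0 < B\<close> by (simp add: ln_div algebra_simps)
  then have "ln a + (\<delta> * ln \<delta> - \<kappa>) / a \<le> ln B"
    using a by (simp add: field_simps)
  then have "a * exp ((\<delta> * ln \<delta> - \<kappa>) / a) \<le> B"
    using a \<open>0 < B\<close> by (metis exp_add exp_le_cancel_iff exp_ln)
  then show ?thesis
    using rounding_bound_eq_exp assms False unfolding a_def by simp
qed

lemma prod_nth_le_prod_set:
  fixes g :: "'a \<Rightarrow> real"
  assumes "\<And>x. x \<in> set xs \<Longrightarrow> 0 \<le> g x \<and> g x \<le> 1"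
  shows "(\<Prod>i<length xs. g (xs ! i)) \<le> prod g (set xs)"
  using assms
proof (induction xs)
  case Nil
  then show ?case by simp
next
  case (Cons x xs)
  have "(\<Prod>i<length (x # xs). g ((x # xs) ! i)) = g x * (\<Prod>i<length xs. g (xs ! i))"
    unfolding length_Cons prod.lessThan_Suc_shift by simp
  also have "\<dots> \<le> g x * prod g (set xs)"
    using Cons by (simp add: mult_left_mono)
  also have "\<dots> \<le> prod g (set (x # xs))"
    using Cons.prems by (cases "x \<in> set xs")
      (auto simp: insert_absorb mult_left_le_one_le prod_nonneg)
  finally show ?case .
qed

definition tuple_law :: "('v set \<Rightarrow> ('v \<Rightarrow> 's) pmf) \<Rightarrow> 'v list \<Rightarrow> 's list pmf" where
  "tuple_law X S = map_pmf (\<lambda>\<phi>. map \<phi> S) (X (set S))"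

definition marginal_product :: "('v set \<Rightarrow> ('v \<Rightarrow> 's) pmf) \<Rightarrow> 'v list \<Rightarrow> 's list \<Rightarrow> real" where
  "marginal_product X S ys = (\<Prod>i<length S. pmf (map_pmf (\<lambda>\<phi>. \<phi> (S ! i)) (X (set S))) (ys ! i))"

lemma total_corr_eq_KL_div: "total_corr X S = KL_div (tuple_law X S) (marginal_product X S)"
  by (simp add: total_corr_def tuple_law_def marginal_product_def[abs_def] Let_def)

lemma SA_solution_marginal:
  fixes X :: "'v::finite set \<Rightarrow> ('v \<Rightarrow> 's::finite) pmf"
  assumes "SA_solution r X" "card S \<le> r" "x \<in> S"
  shows "map_pmf (\<lambda>\<phi>. \<phi> x) (X S) = map_pmf (\<lambda>\<phi>. \<phi> x) (X {x})"
proof -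
  have "card {x} \<le> r"
    using assms(2,3) card_mono[of S "{x}"] by simp
  then have "map_pmf (\<lambda>\<phi>. restrict \<phi> (S \<inter> {x})) (X S) = map_pmf (\<lambda>\<phi>. restrict \<phi> (S \<inter> {x})) (X {x})"
    using assms(1,2) unfolding SA_solution_def by blast
  then have "map_pmf (\<lambda>\<phi>. \<phi> x) (map_pmf (\<lambda>\<phi>. restrict \<phi> (S \<inter> {x})) (X S))
      = map_pmf (\<lambda>\<phi>. \<phi> x) (map_pmf (\<lambda>\<phi>. restrict \<phi> (S \<inter> {x})) (X {x}))"
    by simp
  then show ?thesis using assms(3) by (simp add: map_pmf_comp)
qed

lemma pmf_indep_rounding_map:
  fixes X :: "'v::finite set \<Rightarrow> ('v \<Rightarrow> 's::finite) pmf"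
  shows "pmf (map_pmf (\<lambda>\<phi>. map \<phi> S) (indep_rounding X)) (map \<phi> S)
    = (\<Prod>x\<in>set S. pmf (map_pmf (\<lambda>\<psi>. \<psi> x) (X {x})) (\<phi> x))"
proof -
  define M where "M = (\<lambda>x. map_pmf (\<lambda>\<psi>. \<psi> x) (X {x}))"
  have "(\<lambda>\<psi>. map \<psi> S) -` {map \<phi> S} = Pi UNIV (\<lambda>x. if x \<in> set S then {\<phi> x} else UNIV)"
    by (auto simp: map_eq_conv Pi_def split: if_splits)
  then have "pmf (map_pmf (\<lambda>\<phi>. map \<phi> S) (indep_rounding X)) (map \<phi> S)
      = measure_pmf.prob (Pi_pmf UNIV undefined M) (Pi UNIV (\<lambda>x. if x \<in> set S then {\<phi> x} else UNIV))"
    by (simp add: pmf_map indep_rounding_def M_def)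
  also have "\<dots> = (\<Prod>x\<in>UNIV. measure_pmf.prob (M x) (if x \<in> set S then {\<phi> x} else UNIV))"
    by (rule measure_Pi_pmf_Pi) simp
  also have "\<dots> = (\<Prod>x\<in>set S. pmf (M x) (\<phi> x))"
    by (simp add: measure_pmf_single prod.If_cases Int_def if_distrib cong: if_cong)
  finally show ?thesis by (simp add: M_def)
qed

lemma marginal_product_le_pmf_indep_rounding:
  fixes X :: "'v::finite set \<Rightarrow> ('v \<Rightarrow> 's::finite) pmf"
  assumes "SA_solution r X" "card (set S) \<le> r" "ys \<in> set_pmf (tuple_law X S)"
  shows "0 < marginal_product X S ys"
    and "marginal_product X S ys \<le> pmf (map_pmf (\<lambda>\<phi>. map \<phi> S) (indep_rounding X)) ys"
proof -
  obtain \<phi> where \<phi>: "\<phi> \<in> set_pmf (X (set S))" "ys = map \<phi> S"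
    using assms(3) unfolding tuple_law_def by auto
  have mp_eq: "marginal_product X S ys
      = (\<Prod>i<length S. pmf (map_pmf (\<lambda>\<psi>. \<psi> (S ! i)) (X (set S))) (\<phi> (S ! i)))"
    unfolding marginal_product_def \<phi>(2) by (intro prod.cong) auto
  moreover have "0 < \<dots>"
    using \<phi>(1) by (intro prod_pos) (auto intro!: pmf_positive)
  ultimately show "0 < marginal_product X S ys" by simp
  have "marginal_product X S ys = (\<Prod>i<length S. pmf (map_pmf (\<lambda>\<psi>. \<psi> (S ! i)) (X {S ! i})) (\<phi> (S ! i)))"
    unfolding mp_eq using SA_solution_marginal[OF assms(1,2)] by (intro prod.cong) auto
  also have "\<dots> \<le> (\<Prod>x\<in>set S. pmf (map_pmf (\<lambda>\<psi>. \<psi> x) (X {x})) (\<phi> x))"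
    by (rule prod_nth_le_prod_set) (simp add: pmf_le_1)
  also have "\<dots> = pmf (map_pmf (\<lambda>\<phi>. map \<phi> S) (indep_rounding X)) ys"
    unfolding \<phi>(2) by (rule pmf_indep_rounding_map[symmetric])
  finally show "marginal_product X S ys \<le> pmf (map_pmf (\<lambda>\<phi>. map \<phi> S) (indep_rounding X)) ys" .
qed

lemma total_corr_ge_two_point_test:
  fixes X :: "'v::finite set \<Rightarrow> ('v \<Rightarrow> 's::finite) pmf" and f :: "'s list \<Rightarrow> real"
  assumes "SA_solution r X" "card (set S) \<le> r"
    and "\<And>ys. 0 \<le> f ys \<and> f ys \<le> 1" "0 < t1" "0 < t2"
  shows "ln t1 * measure_pmf.expectation (X (set S)) (\<lambda>\<phi>. f (map \<phi> S))
      + ln t2 * (1 - measure_pmf.expectation (X (set S)) (\<lambda>\<phi>. f (map \<phi> S))) + 1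
      - t1 * measure_pmf.expectation (indep_rounding X) (\<lambda>\<phi>. f (map \<phi> S)) - t2
    \<le> total_corr X S"
  using KL_div_ge_two_point_test[of "tuple_law X S" "map_pmf (\<lambda>\<phi>. map \<phi> S) (indep_rounding X)"
      "marginal_product X S" f t1 t2]
    marginal_product_le_pmf_indep_rounding[OF assms(1,2)] assms(3-)
  by (simp add: total_corr_eq_KL_div tuple_law_def)

lemma csp_instance_finite_support:
  assumes "csp_instance k W P"
  shows "finite (set_pmf W)"
  using assms unfolding csp_instance_def
  by (intro finite_subset[OF _ finite_lists_length_eq[of UNIV k]]) auto

lemma expectation_assignment_value:
  fixes R :: "('v::finite \<Rightarrow> 's::finite) pmf"
  assumes "finite (set_pmf W)"
  shows "measure_pmf.expectation R (assignment_value W P)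
    = measure_pmf.expectation W (\<lambda>S. measure_pmf.expectation R (\<lambda>\<phi>. P S (map \<phi> S)))"
proof -
  have "measure_pmf.expectation R (assignment_value W P)
      = measure_pmf.expectation R (\<lambda>\<phi>. \<Sum>S\<in>set_pmf W. P S (map \<phi> S) * pmf W S)"
    unfolding assignment_value_def using assms by (simp add: integral_measure_pmf_real)
  also have "\<dots> = (\<Sum>S\<in>set_pmf W. measure_pmf.expectation R (\<lambda>\<phi>. P S (map \<phi> S)) * pmf W S)"
    by (simp add: integrable_measure_pmf_finite)
  also have "\<dots> = measure_pmf.expectation W (\<lambda>S. measure_pmf.expectation R (\<lambda>\<phi>. P S (map \<phi> S)))"
    using assms by (simp add: integral_measure_pmf_real)
  finally show ?thesis .
qed

lemma corr_ge_two_point_test: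
  fixes X :: "'v::finite set \<Rightarrow> ('v \<Rightarrow> 's::finite) pmf"
  assumes csp: "csp_instance k W P" and "SA_solution k X" "0 < t1" "0 < t2"
  shows "ln t1 * SA_value W P X + ln t2 * (1 - SA_value W P X) + 1
      - t1 * measure_pmf.expectation (indep_rounding X) (assignment_value W P) - t2 \<le> corr W X"
proof -
  have fin_W: "finite (set_pmf W)"
    using csp by (rule csp_instance_finite_support)
  have "card (set S) \<le> k" if "S \<in> set_pmf W" for S
    using csp that card_length unfolding csp_instance_def by metis
  moreover have "0 \<le> P S ys \<and> P S ys \<le> 1" for S ys
    using csp unfolding csp_instance_def by simp
  ultimately have "measure_pmf.expectation W (\<lambda>S.
        ln t1 * measure_pmf.expectation (X (set S)) (\<lambda>\<phi>. P S (map \<phi> S))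
      + ln t2 * (1 - measure_pmf.expectation (X (set S)) (\<lambda>\<phi>. P S (map \<phi> S))) + 1
      - t1 * measure_pmf.expectation (indep_rounding X) (\<lambda>\<phi>. P S (map \<phi> S)) - t2)
    \<le> corr W X"
    unfolding corr_def using total_corr_ge_two_point_test[OF assms(2) _ _ assms(3,4)] fin_W
    by (intro integral_mono_AE) (auto simp: AE_measure_pmf_iff integrable_measure_pmf_finite)
  then show ?thesis
    using fin_W by (simp add: SA_value_def expectation_assignment_value
        integrable_measure_pmf_finite algebra_simps)
qed

lemma SA_value_le_1:
  fixes X :: "'v::finite set \<Rightarrow> ('v \<Rightarrow> 's::finite) pmf"
  assumes "csp_instance k W P"
  shows "SA_value W P X \<le> 1"
proof -
  have "measure_pmf.expectation (X (set S)) (\<lambda>\<phi>. P S (map \<phi> S)) \<le> 1" for S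
    using assms unfolding csp_instance_def
    by (intro measure_pmf.integral_le_const) (auto simp: integrable_measure_pmf_finite)
  then show ?thesis
    unfolding SA_value_def using csp_instance_finite_support[OF assms]
    by (intro measure_pmf.integral_le_const) (auto simp: integrable_measure_pmf_finite)
qed

theorem lemma5p3:
  fixes k :: nat
    and W :: "'v::finite list pmf"
    and P :: "'v list \<Rightarrow> 's::finite list \<Rightarrow> real"
    and X :: "'v set \<Rightarrow> ('v \<Rightarrow> 's) pmf"
    and \<kappa> \<delta> :: real
  assumes "csp_instance k W P"
    and "SA_solution k X"
    and "corr W X \<le> \<kappa>"
    and "SA_value W P X = 1 - \<delta>"
  shows "measure_pmf.expectation (indep_rounding X) (\<lambda>\<phi>. assignment_value W P \<phi>)
           \<ge> rounding_bound \<delta> \<kappa>"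
proof -
  have P_nonneg: "0 \<le> P S ys" for S ys
    using assms(1) unfolding csp_instance_def by simp
  have "0 \<le> \<delta>"
    using SA_value_le_1[OF assms(1), of X] assms(4) by simp
  moreover have "0 \<le> SA_value W P X"
    unfolding SA_value_def using P_nonneg by (auto intro!: integral_nonneg)
  then have "\<delta> \<le> 1"
    using assms(4) by simp
  moreover have "0 \<le> measure_pmf.expectation (indep_rounding X) (assignment_value W P)"
    unfolding assignment_value_def using P_nonneg by (auto intro!: integral_nonneg)
  moreover have "ln t1 * (1 - \<delta>) + ln t2 * \<delta> + 1
      - t1 * measure_pmf.expectation (indep_rounding X) (assignment_value W P) - t2 \<le> \<kappa>"
    if "0 < t1" "0 < t2" for t1 t2
    using corr_ge_two_point_test[OF assms(1,2) that] assms(3,4) by simp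
  ultimately show ?thesis
    by (rule rounding_bound_le_of_variational)
qed

end
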